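(* For every finite graph $G$ and every pair of positive integers $g,k$, there exist a finite graph $G'$ with girth at least $g$ and a surjective homomorphism $h:V(G')\to V(G)$ such that for every proper $k$-colouring $c'$ of $G'$ there is a proper $k$-colouring $c$ of $G$ with $c(v)\in c'(h^{-1}(v))$ for all $v\in V(G)$. In particular $\chi(G')=\chi(G)$.
   Context: A homomorphism from $G'$ to $G$ is a map $h:V(G')\to V(G)$ such that $uv\in E(G')$ implies $h(u)h(v)\in E(G)$. A proper $k$-colouring is a map to $\{1,\dots,k\}$ giving adjacent vertices different colours. For a set $A$ of vertices, $c'(A)$ denotes the set of colours used on $A$. The girth of a graph is the length of its shortest cycle (infinite if acyclic). *)

theory Defs
  imports Main
begin

definition fin_graph :: "'a set \<Rightarrow> ('a \<times> 'a) set \<Rightarrow> bool" where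
  "fin_graph V E \<longleftrightarrow> finite V \<and> E \<subseteq> V \<times> V \<and> sym E \<and> irrefl E"

definition is_cycle :: "'a set \<Rightarrow> ('a \<times> 'a) set \<Rightarrow> 'a list \<Rightarrow> bool" where
  "is_cycle V E vs \<longleftrightarrow> length vs \<ge> 3 \<and> distinct vs \<and> set vs \<subseteq> V
     \<and> (\<forall>i < length vs - 1. (vs ! i, vs ! Suc i) \<in> E)
     \<and> (last vs, hd vs) \<in> E"

text \<open>Girth at least g: every cycle has length at least g (vacuous if acyclic,
  matching girth = infinity).\<close>
definition girth_at_least :: "'a set \<Rightarrow> ('a \<times> 'a) set \<Rightarrow> nat \<Rightarrow> bool" where
  "girth_at_least V E g \<longleftrightarrow> (\<forall>vs. is_cycle V E vs \<longrightarrow> length vs \<ge> g)"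

definition graph_hom ::
  "'b set \<Rightarrow> ('b \<times> 'b) set \<Rightarrow> 'a set \<Rightarrow> ('a \<times> 'a) set \<Rightarrow> ('b \<Rightarrow> 'a) \<Rightarrow> bool" where
  "graph_hom V' E' V E h \<longleftrightarrow> h ` V' \<subseteq> V \<and> (\<forall>(u, v) \<in> E'. (h u, h v) \<in> E)"

definition proper_colouring ::
  "'a set \<Rightarrow> ('a \<times> 'a) set \<Rightarrow> nat \<Rightarrow> ('a \<Rightarrow> nat) \<Rightarrow> bool" where
  "proper_colouring V E k c \<longleftrightarrow> c ` V \<subseteq> {1..k} \<and> (\<forall>(u, v) \<in> E. c u \<noteq> c v)"

end

theory Submission
  imports Defs Complex_Main
begin

text \<open>Blow up every vertex of \<open>G\<close> into \<open>N\<close> copies and join copies of adjacent vertices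
  independently with probability \<open>p = 1/K\<close>. For suitable \<open>N\<close>, \<open>K\<close> and \<open>a\<close>, the expected number
  of cycles shorter than \<open>g\<close> is at most \<open>N/4\<close>, while the probability that two \<open>a\<close>-sets in the
  fibres over some edge of \<open>G\<close> are not joined is below \<open>1/2\<close> in total; so some outcome has
  fewer than \<open>N/2\<close> short cycles and joins all such pairs. Deleting the first vertex of every
  short cycle leaves girth at least \<open>g\<close> and more than \<open>k a\<close> vertices in every fibre. In a proper
  \<open>k\<close>-colouring of the result every fibre therefore has a colour class of size \<open>a\<close>; picking such a
  colour for each vertex of \<open>G\<close> is proper, as equal classes over an edge would be joined.\<close>

text \<open>The random subset of \<open>U\<close> containing each element independently with probability \<open>p\<close>:
  probabilities and expectations are sums over \<open>Pow U\<close> weighted by this function.\<close>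

definition bernoulli_weight :: "'b set \<Rightarrow> real \<Rightarrow> 'b set \<Rightarrow> real" where
  "bernoulli_weight U p S = (\<Prod>x\<in>U. if x \<in> S then p else 1 - p)"

lemma prod_if_mem:
  assumes "finite W" "S \<subseteq> W"
  shows "(\<Prod>x\<in>W. if x \<in> S then a x else b x) = prod a S * prod b (W - S)"
  using assms by (simp add: prod.If_cases Int_absorb1 flip: Diff_eq)

lemma sum_Pow_prod_if:
  fixes a b :: "'b \<Rightarrow> 'c::comm_semiring_1"
  assumes "finite W"
  shows "(\<Sum>S\<in>Pow W. \<Prod>x\<in>W. if x \<in> S then a x else b x) = (\<Prod>x\<in>W. a x + b x)"
  using assms by (simp add: prod_add prod_if_mem)

lemma sum_bernoulli_weight: "finite U \<Longrightarrow> (\<Sum>S\<in>Pow U. bernoulli_weight U p S) = 1"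
  unfolding bernoulli_weight_def using sum_Pow_prod_if[of U "\<lambda>_. p" "\<lambda>_. 1 - p"] by simp

lemma bernoulli_weight_nonneg: "0 \<le> p \<Longrightarrow> p \<le> 1 \<Longrightarrow> 0 \<le> bernoulli_weight U p S"
  unfolding bernoulli_weight_def by (intro prod_nonneg) auto

lemma sum_bernoulli_weight_superset:
  assumes "finite U" "T \<subseteq> U"
  shows "(\<Sum>S\<in>Pow U. if T \<subseteq> S then bernoulli_weight U p S else 0) = p ^ card T"
proof -
  have "(if T \<subseteq> S then bernoulli_weight U p S else 0)
      = (\<Prod>x\<in>U. if x \<in> S then p else if x \<in> T then 0 else 1 - p)" if "S \<subseteq> U" for S
    using that assms unfolding bernoulli_weight_def
    by (cases "T \<subseteq> S") (auto intro!: prod.cong prod_zero)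
  then have "(\<Sum>S\<in>Pow U. if T \<subseteq> S then bernoulli_weight U p S else 0)
      = (\<Sum>S\<in>Pow U. \<Prod>x\<in>U. if x \<in> S then p else if x \<in> T then 0 else 1 - p)"
    by (intro sum.cong) auto
  also have "\<dots> = (\<Prod>x\<in>U. p + (if x \<in> T then 0 else 1 - p))"
    by (rule sum_Pow_prod_if[OF assms(1)])
  also have "\<dots> = (\<Prod>x\<in>U. if x \<in> T then p else 1)"
    by (intro prod.cong) auto
  finally show ?thesis
    using assms by (simp add: prod.If_cases Int_absorb1)
qed

lemma bernoulli_weight_complement:
  "S \<subseteq> U \<Longrightarrow> bernoulli_weight U (1 - p) (U - S) = bernoulli_weight U p S"
  unfolding bernoulli_weight_def by (intro prod.cong) auto

lemma sum_bernoulli_weight_disjoint: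
  assumes "finite U" "T \<subseteq> U"
  shows "(\<Sum>S\<in>Pow U. if T \<inter> S = {} then bernoulli_weight U p S else 0) = (1 - p) ^ card T"
proof -
  have "(\<Sum>S\<in>Pow U. if T \<inter> S = {} then bernoulli_weight U p S else 0)
      = (\<Sum>S\<in>Pow U. if T \<subseteq> S then bernoulli_weight U (1 - p) S else 0)"
  proof (rule sum.reindex_bij_witness[of _ "\<lambda>S. U - S" "\<lambda>S. U - S"])
    fix S assume "S \<in> Pow U"
    then show "(if T \<subseteq> U - S then bernoulli_weight U (1 - p) (U - S) else 0)
        = (if T \<inter> S = {} then bernoulli_weight U p S else 0)"
      using assms(2) bernoulli_weight_complement[of S U p] by auto
  qed auto
  also have "\<dots> = (1 - p) ^ card T"
    by (rule sum_bernoulli_weight_superset[OF assms])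
  finally show ?thesis .
qed

definition edge_rel :: "'b set set \<Rightarrow> ('b \<times> 'b) set" where
  "edge_rel S = {(x, y). {x, y} \<in> S}"

definition cycle_edges :: "'b list \<Rightarrow> 'b set set" where
  "cycle_edges vs = (\<lambda>i. {vs ! i, vs ! (Suc i mod length vs)}) ` {..<length vs}"

definition short_cycles :: "'b set \<Rightarrow> ('b \<times> 'b) set \<Rightarrow> nat \<Rightarrow> 'b list set" where
  "short_cycles V E g = {vs. is_cycle V E vs \<and> length vs < g}"

lemma is_cycle_mono: "is_cycle V E vs \<Longrightarrow> V \<subseteq> V' \<Longrightarrow> E \<subseteq> E' \<Longrightarrow> is_cycle V' E' vs"
  unfolding is_cycle_def by blast

lemma finite_short_cycles: "finite V \<Longrightarrow> finite (short_cycles V E g)"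
  by (rule finite_subset[OF _ finite_lists_length_le[of V g]])
    (auto simp: short_cycles_def is_cycle_def)

lemma cycle_edges_subset:
  assumes "is_cycle V (edge_rel S) vs"
  shows "cycle_edges vs \<subseteq> S"
proof
  fix e assume "e \<in> cycle_edges vs"
  then obtain i where i: "i < length vs" "e = {vs ! i, vs ! (Suc i mod length vs)}"
    unfolding cycle_edges_def by auto
  have L: "length vs \<ge> 3" using assms unfolding is_cycle_def by auto
  show "e \<in> S"
  proof (cases "Suc i < length vs")
    case True
    then show ?thesis using assms i unfolding is_cycle_def edge_rel_def by auto
  next
    case False
    with i have "Suc i = length vs" by simp
    then have "i = length vs - 1" "Suc i mod length vs = 0" by simp_all
    moreover have "vs \<noteq> []" using L by auto
    ultimately have "last vs = vs ! i" "hd vs = vs ! (Suc i mod length vs)"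
      by (auto simp: last_conv_nth hd_conv_nth)
    then show ?thesis using assms i unfolding is_cycle_def edge_rel_def by auto
  qed
qed

lemma card_cycle_edges:
  assumes "distinct vs" "length vs \<ge> 3"
  shows "card (cycle_edges vs) = length vs"
proof -
  let ?L = "length vs"
  have "0 < ?L" using assms(2) by linarith
  have "inj_on (\<lambda>i. {vs ! i, vs ! (Suc i mod ?L)}) {..<?L}"
  proof (rule inj_onI, rule ccontr)
    fix i j assume ij: "i \<in> {..<?L}" "j \<in> {..<?L}" "i \<noteq> j"
      and eq: "{vs ! i, vs ! (Suc i mod ?L)} = {vs ! j, vs ! (Suc j mod ?L)}"
    have nth_eq: "vs ! x = vs ! y \<longleftrightarrow> x = y" if "x < ?L" "y < ?L" for x y
      using assms(1) that by (simp add: nth_eq_iff_index_eq)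
    have "vs ! i = vs ! (Suc j mod ?L)" "vs ! (Suc i mod ?L) = vs ! j"
      using eq ij nth_eq by (auto simp: doubleton_eq_iff)
    moreover have "Suc j mod ?L < ?L" "Suc i mod ?L < ?L"
      using mod_less_divisor[OF \<open>0 < ?L\<close>] by blast+
    ultimately have "Suc j mod ?L = i" "Suc i mod ?L = j"
      using ij nth_eq by auto
    then show False
      using ij assms(2) by (cases "Suc j = ?L"; cases "Suc i = ?L") auto
  qed
  then show ?thesis unfolding cycle_edges_def by (simp add: card_image)
qed

lemma sum_bernoulli_weight_is_cycle:
  assumes "finite U" "0 \<le> p" "p \<le> 1"
  shows "(\<Sum>S\<in>Pow U. if is_cycle V (edge_rel S) vs then bernoulli_weight U p S else 0)
    \<le> p ^ length vs"
proof (cases "distinct vs \<and> length vs \<ge> 3 \<and> cycle_edges vs \<subseteq> U")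
  case True
  have "(\<Sum>S\<in>Pow U. if is_cycle V (edge_rel S) vs then bernoulli_weight U p S else 0)
      \<le> (\<Sum>S\<in>Pow U. if cycle_edges vs \<subseteq> S then bernoulli_weight U p S else 0)"
    using cycle_edges_subset[of V _ vs] bernoulli_weight_nonneg[OF assms(2,3), of U]
    by (intro sum_mono) auto
  also have "\<dots> = p ^ card (cycle_edges vs)"
    using True assms by (intro sum_bernoulli_weight_superset) auto
  also have "\<dots> = p ^ length vs" using True by (simp add: card_cycle_edges)
  finally show ?thesis .
next
  case False
  have "\<not> is_cycle V (edge_rel S) vs" if "S \<subseteq> U" for S
    using False cycle_edges_subset that unfolding is_cycle_def by blast
  then show ?thesis using assms by simp
qed

lemma expected_short_cycles_le:
  fixes p :: real
  assumes "finite V" "finite U" "0 \<le> p" "p \<le> 1"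
  shows "(\<Sum>S\<in>Pow U. bernoulli_weight U p S * card (short_cycles V (edge_rel S) g))
    \<le> (\<Sum>l<g. (card V * p) ^ l)"
proof -
  define words where "words l = {vs. set vs \<subseteq> V \<and> length vs = l}" for l
  define W where "W = (\<Union>l<g. words l)"
  have fin_words: "finite (words l)" for l
    unfolding words_def using assms(1) by (rule finite_lists_length_eq)
  have short_cycles_eq: "short_cycles V (edge_rel S) g = {vs \<in> W. is_cycle V (edge_rel S) vs}" for S
    unfolding short_cycles_def W_def words_def is_cycle_def by auto
  have "(\<Sum>S\<in>Pow U. bernoulli_weight U p S * card (short_cycles V (edge_rel S) g))
      = (\<Sum>S\<in>Pow U. \<Sum>vs\<in>W. if is_cycle V (edge_rel S) vs then bernoulli_weight U p S else 0)"
    using fin_words by (simp add: short_cycles_eq W_def sum.If_cases Int_def mult.commute)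
  also have "\<dots> = (\<Sum>vs\<in>W. \<Sum>S\<in>Pow U. if is_cycle V (edge_rel S) vs then bernoulli_weight U p S else 0)"
    by (rule sum.swap)
  also have "\<dots> \<le> (\<Sum>vs\<in>W. p ^ length vs)"
    by (intro sum_mono sum_bernoulli_weight_is_cycle assms)
  also have "\<dots> = (\<Sum>l<g. \<Sum>vs\<in>words l. p ^ length vs)"
    unfolding W_def using fin_words by (intro sum.UNION_disjoint) (auto simp: words_def)
  also have "\<dots> = (\<Sum>l<g. (card V * p) ^ l)"
    using card_lists_length_eq[OF assms(1)]
    by (simp add: words_def power_mult_distrib)
  finally show ?thesis .
qed

lemma sum_bernoulli_weight_no_edge_between:
  assumes "finite U" "A \<inter> B = {}" "finite A" "finite B"
    and "{{x, y} | x y. x \<in> A \<and> y \<in> B} \<subseteq> U"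
  shows "(\<Sum>S\<in>Pow U. if \<forall>x\<in>A. \<forall>y\<in>B. {x, y} \<notin> S then bernoulli_weight U p S else 0)
    = (1 - p) ^ (card A * card B)"
proof -
  let ?T = "{{x, y} | x y. x \<in> A \<and> y \<in> B}"
  have T: "?T = (\<lambda>(x, y). {x, y}) ` (A \<times> B)" by auto
  have "inj_on (\<lambda>(x, y). {x, y}) (A \<times> B)"
    using assms(2) by (auto simp: inj_on_def doubleton_eq_iff)
  then have card_T: "card ?T = card A * card B"
    unfolding T by (simp add: card_image card_cartesian_product)
  have "(\<forall>x\<in>A. \<forall>y\<in>B. {x, y} \<notin> S) \<longleftrightarrow> ?T \<inter> S = {}" for S by auto
  then show ?thesis
    using sum_bernoulli_weight_disjoint[OF assms(1,5), of p] card_T by simp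
qed

lemma markov_sum_le:
  fixes w f :: "'s \<Rightarrow> real"
  assumes "\<And>S. S \<in> \<Omega> \<Longrightarrow> 0 \<le> w S" "\<And>S. S \<in> \<Omega> \<Longrightarrow> 0 \<le> f S" and "0 < t"
  shows "(\<Sum>S\<in>\<Omega>. if t \<le> f S then w S else 0) \<le> (\<Sum>S\<in>\<Omega>. w S * f S) / t"
proof -
  have "(if t \<le> f S then w S else 0) \<le> w S * f S / t" if "S \<in> \<Omega>" for S
    using assms(1,2)[OF that] assms(3) by (auto simp: field_simps mult_right_mono)
  then show ?thesis
    unfolding sum_divide_distrib by (rule sum_mono)
qed

lemma exists_avoiding_bad_events:
  fixes w :: "'s \<Rightarrow> real"
  assumes "finite I" "\<And>S. S \<in> \<Omega> \<Longrightarrow> 0 \<le> w S" "(\<Sum>S\<in>\<Omega>. w S) = 1"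
    and "(\<Sum>S\<in>\<Omega>. if Q S then w S else 0) + (\<Sum>i\<in>I. \<Sum>S\<in>\<Omega>. if B i S then w S else 0) < 1"
  shows "\<exists>S\<in>\<Omega>. \<not> Q S \<and> (\<forall>i\<in>I. \<not> B i S)"
proof (rule ccontr)
  assume bad: "\<not> ?thesis"
  have "w S \<le> (if Q S then w S else 0) + (\<Sum>i\<in>I. if B i S then w S else 0)" if S: "S \<in> \<Omega>" for S
  proof (cases "Q S")
    case True
    then show ?thesis using assms(2)[OF S] by (simp add: sum_nonneg)
  next
    case False
    then obtain i where i: "i \<in> I" "B i S" using bad S by blast
    have "(if B i S then w S else 0) \<le> (\<Sum>i\<in>I. if B i S then w S else 0)"
      by (rule member_le_sum) (use i assms(1) assms(2)[OF S] in auto)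
    then show ?thesis using i False by simp
  qed
  then have "(\<Sum>S\<in>\<Omega>. w S)
      \<le> (\<Sum>S\<in>\<Omega>. (if Q S then w S else 0) + (\<Sum>i\<in>I. if B i S then w S else 0))"
    by (rule sum_mono)
  also have "\<dots> = (\<Sum>S\<in>\<Omega>. if Q S then w S else 0) + (\<Sum>i\<in>I. \<Sum>S\<in>\<Omega>. if B i S then w S else 0)"
    by (simp add: sum.distrib sum.swap[of _ I])
  finally show False using assms(3,4) by simp
qed

lemma exists_edge_set_sparse_joining:
  fixes I :: "('b set \<times> 'b set) set" and p :: real
  assumes "finite V" "finite U" "0 \<le> p" "p \<le> 1" "0 < N" "finite I"
    and I: "\<And>A B. (A, B) \<in> I \<Longrightarrow> A \<inter> B = {} \<and> finite A \<and> finite B \<and> card A = a \<and> card B = a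
      \<and> {{x, y} | x y. x \<in> A \<and> y \<in> B} \<subseteq> U"
    and bound: "2 / N * (\<Sum>l<g. (card V * p) ^ l) + card I * (1 - p) ^ (a * a) < 1"
  obtains S where "S \<subseteq> U" "2 * card (short_cycles V (edge_rel S) g) < N"
    "\<And>A B. (A, B) \<in> I \<Longrightarrow> \<exists>x\<in>A. \<exists>y\<in>B. {x, y} \<in> S"
proof -
  let ?w = "bernoulli_weight U p"
  let ?cycles = "\<lambda>S. real (card (short_cycles V (edge_rel S) g))"
  let ?Q = "\<lambda>S. real N \<le> 2 * ?cycles S"
  let ?B = "\<lambda>(A, B) S. \<forall>x\<in>A. \<forall>y\<in>B. {x, y} \<notin> S"
  have w_nonneg: "0 \<le> ?w S" for S by (rule bernoulli_weight_nonneg[OF assms(3,4)])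
  have "(\<Sum>S\<in>Pow U. if ?Q S then ?w S else 0) \<le> (\<Sum>S\<in>Pow U. ?w S * (2 * ?cycles S)) / N"
    using w_nonneg assms(5) by (intro markov_sum_le) auto
  also have "\<dots> = 2 / N * (\<Sum>S\<in>Pow U. ?w S * ?cycles S)"
    by (simp add: sum_distrib_left sum_divide_distrib mult_ac)
  also have "\<dots> \<le> 2 / N * (\<Sum>l<g. (card V * p) ^ l)"
    using expected_short_cycles_le[OF assms(1-4)] by (intro mult_left_mono) auto
  finally have cycles_bad: "(\<Sum>S\<in>Pow U. if ?Q S then ?w S else 0) \<le> 2 / N * (\<Sum>l<g. (card V * p) ^ l)" .
  have "(\<Sum>S\<in>Pow U. if ?B i S then ?w S else 0) = (1 - p) ^ (a * a)" if "i \<in> I" for i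
    using that I sum_bernoulli_weight_no_edge_between[OF assms(2)] by (cases i) auto
  then have "(\<Sum>i\<in>I. \<Sum>S\<in>Pow U. if ?B i S then ?w S else 0) = card I * (1 - p) ^ (a * a)"
    by simp
  then have "\<exists>S\<in>Pow U. \<not> ?Q S \<and> (\<forall>i\<in>I. \<not> ?B i S)"
    using cycles_bad bound
    by (intro exists_avoiding_bad_events[OF assms(6) w_nonneg sum_bernoulli_weight[OF assms(2)]])
      simp
  then obtain S where "S \<subseteq> U" "\<not> ?Q S" "\<forall>i\<in>I. \<not> ?B i S" by blast
  then show ?thesis by (intro that) auto
qed

lemma geometric_sum_term_le:
  fixes b N :: real
  assumes "1 \<le> b" "4 * g * b ^ g \<le> N"
  shows "2 / N * (\<Sum>l<g. b ^ l) \<le> 1 / 2"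
proof (cases "g = 0")
  case False
  then have "0 < 4 * real g * b ^ g" using assms(1) by simp
  then have "0 < N" using assms(2) by linarith
  have "(\<Sum>l<g. b ^ l) \<le> (\<Sum>l<g. b ^ g)"
    using assms(1) by (intro sum_mono power_increasing) auto
  then have "2 / N * (\<Sum>l<g. b ^ l) \<le> 2 / N * (g * b ^ g)"
    using \<open>0 < N\<close> by (intro mult_left_mono) auto
  also have "\<dots> \<le> 1 / 2"
    using assms(2) \<open>0 < N\<close> by (simp add: field_simps)
  finally show ?thesis .
qed simp

lemma one_minus_inverse_power_le_exp:
  fixes x :: real
  assumes "1 \<le> x"
  shows "(1 - 1 / x) ^ m \<le> exp (- (m / x))"
proof -
  have "(1 - 1 / x) ^ m \<le> exp (- (1 / x)) ^ m"
    using assms exp_ge_add_one_self[of "- (1 / x)"] by (intro power_mono) auto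
  then show ?thesis by (simp add: exp_of_nat_mult[symmetric])
qed

lemma four_power_le_exp: "(4::real) ^ m \<le> exp (2 * m)"
proof -
  have "(2::real) \<le> exp 1" using exp_ge_add_one_self[of 1] by simp
  then have "(4::real) \<le> exp 1 * exp 1" using mult_mono[of "2::real" "exp 1" 2 "exp 1"] by simp
  then have "(4::real) ^ m \<le> (exp 1 * exp 1) ^ m" by (intro power_mono) auto
  then show ?thesis by (simp add: exp_of_nat_mult[symmetric] exp_add[symmetric] mult.commute)
qed

lemma exp_neg_le_inverse_one_plus:
  fixes y :: real
  assumes "0 \<le> y"
  shows "exp (- y) \<le> 1 / (1 + y)"
proof -
  have "exp (- y) = 1 / exp y" by (simp add: exp_minus inverse_eq_divide)
  also have "\<dots> \<le> 1 / (1 + y)"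
    using exp_ge_add_one_self[of y] assms by (intro divide_left_mono) auto
  finally show ?thesis .
qed

lemma unjoined_pairs_term_lt:
  fixes n k K M :: nat
  assumes "1 \<le> K" "4 * k + 2 * n ^ 2 + 2 \<le> M"
  shows "real n ^ 2 * 4 ^ (2 * k * K * M) * (1 - 1 / K) ^ (K * M * (K * M)) < (1 / 2 :: real)"
proof -
  define y :: real where "y = 2 * real n ^ 2 + 2"
  have K: "real K \<ge> 1" using assms(1) by simp
  have "1 * 1 \<le> real K * M" using K assms(2) by (intro mult_mono) auto
  have "4 * k \<le> M" using assms(2) by linarith
  then have "4 * real k \<le> M" using of_nat_mono[where 'a=real] by fastforce
  have "2 * real (2 * k * K * M) - real (K * M * (K * M)) / K = - ((real K * M) * (real M - 4 * real k))"
    using K by (simp add: field_simps)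
  also have "\<dots> \<le> - (1 * (real M - 4 * real k))"
    using \<open>1 * 1 \<le> real K * M\<close> \<open>4 * real k \<le> M\<close>
    by (intro le_imp_neg_le mult_right_mono) auto
  also have "\<dots> \<le> - y"
    using of_nat_mono[OF assms(2), where 'a=real] unfolding y_def by simp
  finally have exponent: "2 * real (2 * k * K * M) - real (K * M * (K * M)) / K \<le> - y" .
  have "real n ^ 2 * 4 ^ (2 * k * K * M) * (1 - 1 / K) ^ (K * M * (K * M))
      \<le> real n ^ 2 * exp (2 * real (2 * k * K * M)) * exp (- (real (K * M * (K * M)) / K))"
    using K
    by (intro mult_mono[OF mult_left_mono[OF four_power_le_exp] one_minus_inverse_power_le_exp])
      (auto simp: divide_le_eq)
  also have "\<dots> \<le> real n ^ 2 * exp (- y)"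
    using exponent by (simp add: mult.assoc exp_add[symmetric] mult_left_mono)
  also have "\<dots> \<le> real n ^ 2 * (1 / (1 + y))"
    using exp_neg_le_inverse_one_plus[of y] unfolding y_def by (intro mult_left_mono) auto
  also have "\<dots> < 1 / 2" unfolding y_def by (simp add: divide_less_eq add_pos_nonneg)
  finally show ?thesis .
qed

text \<open>Each of the at most \<open>(n N)\<^sup>l\<close> candidate \<open>l\<close>-cycles survives with probability \<open>K\<^sup>-\<^sup>l\<close>, so the
  expected number of short cycles is at most \<open>g b\<^sup>g\<close> with \<open>b = n N / K\<close>, and \<open>K = 4 g b\<^sup>g\<close> makes it at
  most \<open>N/4\<close>. An \<open>a\<close>-set pair stays unjoined with probability at most \<open>exp (- a\<^sup>2 / K)\<close>, and
  \<open>a = K M\<close> with \<open>M \<ge> 4 k + 2 n\<^sup>2 + 2\<close> makes this beat the \<open>n\<^sup>2 4\<^sup>N\<close> candidate pairs.\<close>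

lemma exists_blowup_parameters:
  fixes n k g :: nat
  assumes "0 < n" "0 < k" "0 < g"
  obtains K a :: nat where "1 \<le> K" "0 < a"
    "2 / real (2 * k * a) * (\<Sum>l<g. (real (n * (2 * k * a)) * (1 / K)) ^ l)
      + real n ^ 2 * 4 ^ (2 * k * a) * (1 - 1 / K) ^ (a * a) < 1"
proof -
  define M where "M = 4 * k + 2 * n ^ 2 + 2"
  define b where "b = 2 * k * n * M"
  define K where "K = 4 * g * b ^ g"
  define a where "a = K * M"
  have "0 < b" using assms unfolding b_def M_def by simp
  then have "1 \<le> K" using \<open>0 < g\<close> unfolding K_def by simp
  then have "0 < a" unfolding a_def M_def by simp
  have "K * 1 \<le> K * (2 * k * M)" using \<open>0 < k\<close> unfolding M_def by (intro mult_le_mono2) simp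
  then have "K \<le> 2 * k * a" unfolding a_def by (simp add: mult_ac)
  then have "4 * g * real b ^ g \<le> real (2 * k * a)"
    using of_nat_mono[OF \<open>K \<le> 2 * k * a\<close>, where 'a=real] unfolding K_def by simp
  then have "2 / real (2 * k * a) * (\<Sum>l<g. real b ^ l) \<le> 1 / 2"
    using \<open>0 < b\<close> by (intro geometric_sum_term_le) simp_all
  moreover have "real (n * (2 * k * a)) * (1 / K) = b"
    using \<open>1 \<le> K\<close> unfolding a_def b_def by (simp add: field_simps)
  ultimately have "2 / real (2 * k * a) * (\<Sum>l<g. (real (n * (2 * k * a)) * (1 / K)) ^ l) \<le> 1 / 2"
    by simp
  moreover have "real n ^ 2 * 4 ^ (2 * k * a) * (1 - 1 / K) ^ (a * a) < 1 / 2"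
  proof -
    have eqs: "2 * k * a = 2 * k * K * M" "a * a = K * M * (K * M)" unfolding a_def by simp_all
    have "4 * k + 2 * n ^ 2 + 2 \<le> M" unfolding M_def by simp
    then show ?thesis unfolding eqs by (rule unjoined_pairs_term_lt[OF \<open>1 \<le> K\<close>])
  qed
  ultimately show ?thesis using that[OF \<open>1 \<le> K\<close> \<open>0 < a\<close>] by linarith
qed

definition joins_subsets :: "('b \<times> 'b) set \<Rightarrow> nat \<Rightarrow> 'b set \<Rightarrow> 'b set \<Rightarrow> bool" where
  "joins_subsets R a A B \<longleftrightarrow>
     (\<forall>A'\<subseteq>A. \<forall>B'\<subseteq>B. card A' = a \<longrightarrow> card B' = a \<longrightarrow> (\<exists>x\<in>A'. \<exists>y\<in>B'. (x, y) \<in> R))"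

lemma pairs_of_subsets_subset:
  "{(A, B). \<exists>(u, v)\<in>E. A \<subseteq> F u \<and> B \<subseteq> F v \<and> P A B} \<subseteq> (\<Union>(u, v)\<in>E. Pow (F u) \<times> Pow (F v))"
  by auto

lemma finite_pairs_of_subsets:
  assumes "finite E" "\<And>v. finite (F v)"
  shows "finite {(A, B). \<exists>(u, v)\<in>E. A \<subseteq> F u \<and> B \<subseteq> F v \<and> P A B}"
proof (rule finite_subset[OF pairs_of_subsets_subset])
  show "finite (\<Union>(u, v)\<in>E. Pow (F u) \<times> Pow (F v))" using assms by (auto split: prod.splits)
qed

lemma card_pairs_of_subsets_le:
  assumes "finite E" "\<And>v. finite (F v)" "\<And>v. card (F v) \<le> N"
  shows "card {(A, B). \<exists>(u, v)\<in>E. A \<subseteq> F u \<and> B \<subseteq> F v \<and> P A B} \<le> card E * 4 ^ N"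
proof -
  have "card (Pow (F u) \<times> Pow (F v)) \<le> 4 ^ N" for u v
  proof -
    have "card (Pow (F u) \<times> Pow (F v)) = 2 ^ card (F u) * 2 ^ card (F v)"
      using assms(2) by (simp add: card_cartesian_product card_Pow)
    also have "\<dots> \<le> 2 ^ N * 2 ^ N"
      using assms(3) by (intro mult_le_mono power_increasing) auto
    finally show ?thesis by (simp add: power_mult_distrib[symmetric])
  qed
  then have "(\<Sum>(u, v)\<in>E. card (Pow (F u) \<times> Pow (F v))) \<le> card E * 4 ^ N"
    using sum_mono[of E "\<lambda>(u, v). card (Pow (F u) \<times> Pow (F v))" "\<lambda>_. 4 ^ N"]
    by (simp add: case_prod_unfold)
  moreover have "card {(A, B). \<exists>(u, v)\<in>E. A \<subseteq> F u \<and> B \<subseteq> F v \<and> P A B}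
      \<le> card (\<Union>(u, v)\<in>E. Pow (F u) \<times> Pow (F v))"
    using assms(1,2) by (intro card_mono[OF _ pairs_of_subsets_subset]) (auto split: prod.splits)
  moreover have "card (\<Union>(u, v)\<in>E. Pow (F u) \<times> Pow (F v)) \<le> (\<Sum>(u, v)\<in>E. card (Pow (F u) \<times> Pow (F v)))"
    using card_UN_le[OF assms(1), of "\<lambda>(u, v). Pow (F u) \<times> Pow (F v)"] by (simp add: case_prod_unfold)
  ultimately show ?thesis by linarith
qed

lemma edge_rel_lifted:
  assumes "S \<subseteq> {{x, y} | x y. x \<in> X \<and> y \<in> X \<and> (h x, h y) \<in> E}" "sym E" "(x, y) \<in> edge_rel S"
  shows "x \<in> X \<and> y \<in> X \<and> (h x, h y) \<in> E"
proof -
  have "{x, y} \<in> S" using assms(3) unfolding edge_rel_def by simp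
  then obtain x' y' where xy': "{x, y} = {x', y'}" "x' \<in> X" "y' \<in> X" "(h x', h y') \<in> E"
    using assms(1) by blast
  from xy'(1) consider "x = x'" "y = y'" | "x = y'" "y = x'" by (auto simp: doubleton_eq_iff)
  then show ?thesis using xy'(2-4) assms(2) by cases (auto dest: symD)
qed

lemma sym_edge_rel: "sym (edge_rel S)"
  unfolding sym_def edge_rel_def by (auto simp: insert_commute)

lemma exists_sparse_joining_relation:
  fixes h :: "'b \<Rightarrow> 'a" and p :: real
  assumes "finite X" "finite E" "sym E" "irrefl E" "0 \<le> p" "p \<le> 1" "0 < N"
    and fibres: "\<And>v. card {x \<in> X. h x = v} \<le> N"
    and bound: "2 / N * (\<Sum>l<g. (card X * p) ^ l) + real (card E) * 4 ^ N * (1 - p) ^ (a * a) < 1"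
  obtains R where "R \<subseteq> X \<times> X" "sym R" "\<And>x y. (x, y) \<in> R \<Longrightarrow> (h x, h y) \<in> E"
    "2 * card (short_cycles X R g) < N"
    "\<And>u v. (u, v) \<in> E \<Longrightarrow> joins_subsets R a {x \<in> X. h x = u} {x \<in> X. h x = v}"
proof -
  define F where "F v = {x \<in> X. h x = v}" for v
  define U where "U = {{x, y} | x y. x \<in> X \<and> y \<in> X \<and> (h x, h y) \<in> E}"
  define I where "I = {(A, B). \<exists>(u, v)\<in>E. A \<subseteq> F u \<and> B \<subseteq> F v \<and> card A = a \<and> card B = a}"
  have fin_F: "finite (F v)" for v unfolding F_def using assms(1) by simp
  have "U \<subseteq> (\<lambda>(x, y). {x, y}) ` (X \<times> X)" unfolding U_def by auto
  then have "finite U" using assms(1) by (meson finite_SigmaI finite_imageI finite_subset)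
  have "finite I" unfolding I_def by (rule finite_pairs_of_subsets[OF assms(2) fin_F])
  have "card I \<le> card E * 4 ^ N"
    unfolding I_def by (rule card_pairs_of_subsets_le[OF assms(2) fin_F]) (simp add: F_def fibres)
  then have "card I * (1 - p) ^ (a * a) \<le> real (card E) * 4 ^ N * (1 - p) ^ (a * a)"
    using assms(6) of_nat_mono[where 'a=real] by (intro mult_right_mono) fastforce+
  then have bound_I: "2 / N * (\<Sum>l<g. (card X * p) ^ l) + card I * (1 - p) ^ (a * a) < 1"
    using bound by linarith
  have I_props: "A \<inter> B = {} \<and> finite A \<and> finite B \<and> card A = a \<and> card B = a
      \<and> {{x, y} | x y. x \<in> A \<and> y \<in> B} \<subseteq> U" if "(A, B) \<in> I" for A B
  proof -
    obtain u v where uv: "(u, v) \<in> E" "A \<subseteq> F u" "B \<subseteq> F v" "card A = a" "card B = a"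
      using \<open>(A, B) \<in> I\<close> unfolding I_def by auto
    have "u \<noteq> v" using uv(1) assms(4) unfolding irrefl_def by auto
    then have "A \<inter> B = {}" using uv(2,3) unfolding F_def by auto
    moreover have "finite A" "finite B" using uv(2,3) fin_F by (auto intro: finite_subset)
    moreover have "{x, y} \<in> U" if "x \<in> A" "y \<in> B" for x y
      using that uv(1-3) unfolding F_def U_def by blast
    ultimately show ?thesis using uv(4,5) by blast
  qed
  obtain S where S: "S \<subseteq> U" "2 * card (short_cycles X (edge_rel S) g) < N"
    "\<And>A B. (A, B) \<in> I \<Longrightarrow> \<exists>x\<in>A. \<exists>y\<in>B. {x, y} \<in> S"
    using exists_edge_set_sparse_joining[OF assms(1) \<open>finite U\<close> assms(5-7) \<open>finite I\<close> I_props bound_I]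
    by blast
  show ?thesis
  proof (rule that)
    show "edge_rel S \<subseteq> X \<times> X" "\<And>x y. (x, y) \<in> edge_rel S \<Longrightarrow> (h x, h y) \<in> E"
      using edge_rel_lifted[OF S(1)[unfolded U_def] assms(3)] by auto
    show "joins_subsets (edge_rel S) a {x \<in> X. h x = u} {x \<in> X. h x = v}" if "(u, v) \<in> E" for u v
      unfolding joins_subsets_def edge_rel_def using that S(3) unfolding I_def F_def by blast
  qed (use sym_edge_rel S(2) in auto)
qed

lemma girth_at_least_delete_short_cycles:
  fixes V :: "'b set" and E :: "('b \<times> 'b) set" and g :: nat
  defines "W \<equiv> V - hd ` short_cycles V E g"
  shows "girth_at_least W (E \<inter> W \<times> W) g"
  unfolding girth_at_least_def
proof (intro allI impI)
  fix vs assume cycle: "is_cycle W (E \<inter> W \<times> W) vs"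
  then have "vs \<noteq> []" "set vs \<subseteq> W" unfolding is_cycle_def by auto
  then have "hd vs \<in> W" by auto
  show "g \<le> length vs"
  proof (rule ccontr)
    assume "\<not> g \<le> length vs"
    then have "vs \<in> short_cycles V E g"
      using is_cycle_mono[OF cycle] unfolding short_cycles_def W_def by auto
    then show False using \<open>hd vs \<in> W\<close> unfolding W_def by auto
  qed
qed

lemma exists_large_colour_class:
  assumes "finite A" "c ` A \<subseteq> {1..k}" "k * (a - 1) < card A"
  shows "\<exists>i\<in>{1..k}. a \<le> card {x \<in> A. c x = i}"
proof (rule ccontr)
  assume none: "\<not> ?thesis"
  have small: "card {x \<in> A. c x = i} \<le> a - 1" if "i \<in> {1..k}" for i
  proof -
    have "\<not> a \<le> card {x \<in> A. c x = i}" using none that by blast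
    then show ?thesis by linarith
  qed
  have "card A = card (\<Union>i\<in>{1..k}. {x \<in> A. c x = i})"
    using assms(2) by (intro arg_cong[where f = card]) auto
  also have "\<dots> \<le> (\<Sum>i\<in>{1..k}. card {x \<in> A. c x = i})"
    by (rule card_UN_le) simp
  also have "\<dots> \<le> k * (a - 1)"
    using sum_mono[of "{1..k}", OF small] by simp
  finally show False using assms(3) by simp
qed

lemma joins_subsets_restrict:
  assumes "joins_subsets R a A B" "A' \<subseteq> A \<inter> W" "B' \<subseteq> B \<inter> W"
  shows "joins_subsets (R \<inter> W \<times> W) a A' B'"
  unfolding joins_subsets_def
proof (intro allI impI)
  fix A'' B'' assume sub: "A'' \<subseteq> A'" "B'' \<subseteq> B'" and "card A'' = a" "card B'' = a"
  moreover have "A'' \<subseteq> A" "B'' \<subseteq> B" using sub assms(2,3) by auto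
  ultimately obtain x y where "x \<in> A''" "y \<in> B''" "(x, y) \<in> R"
    using assms(1) unfolding joins_subsets_def by blast
  then show "\<exists>x\<in>A''. \<exists>y\<in>B''. (x, y) \<in> R \<inter> W \<times> W" using sub assms(2,3) by blast
qed

lemma proper_colouring_from_joined_fibres:
  fixes h :: "'b \<Rightarrow> 'a"
  assumes c': "proper_colouring V' E' k c'" and "finite V'" "E \<subseteq> V \<times> V" "0 < a"
    and large: "\<And>v. v \<in> V \<Longrightarrow> k * (a - 1) < card {x \<in> V'. h x = v}"
    and joined: "\<And>u v. (u, v) \<in> E \<Longrightarrow> joins_subsets E' a {x \<in> V'. h x = u} {x \<in> V'. h x = v}"
  shows "\<exists>c. proper_colouring V E k c \<and> (\<forall>v\<in>V. c v \<in> c' ` {x \<in> V'. h x = v})"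
proof -
  define cls where "cls v i = {x \<in> {x \<in> V'. h x = v}. c' x = i}" for v i
  have "\<exists>i\<in>{1..k}. a \<le> card (cls v i)" if "v \<in> V" for v
    unfolding cls_def using c' assms(2) large[OF that] unfolding proper_colouring_def
    by (intro exists_large_colour_class) auto
  then obtain c where c: "\<And>v. v \<in> V \<Longrightarrow> c v \<in> {1..k} \<and> a \<le> card (cls v (c v))"
    by metis
  have "c u \<noteq> c v" if uv: "(u, v) \<in> E" for u v
  proof
    assume same: "c u = c v"
    have "u \<in> V" "v \<in> V" using uv assms(3) by auto
    obtain A where A: "A \<subseteq> cls u (c u)" "card A = a"
      using c[OF \<open>u \<in> V\<close>] obtain_subset_with_card_n by metis
    obtain B where B: "B \<subseteq> cls v (c v)" "card B = a"
      using c[OF \<open>v \<in> V\<close>] obtain_subset_with_card_n by metis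
    have "A \<subseteq> {x \<in> V'. h x = u}" "B \<subseteq> {x \<in> V'. h x = v}"
      using A(1) B(1) unfolding cls_def by auto
    then obtain x y where "x \<in> A" "y \<in> B" "(x, y) \<in> E'"
      using joined[OF uv, unfolded joins_subsets_def] A(2) B(2) by blast
    moreover have "c' x = c u" "c' y = c v"
      using \<open>x \<in> A\<close> \<open>y \<in> B\<close> A(1) B(1) unfolding cls_def by blast+
    moreover have "c' x \<noteq> c' y" using \<open>(x, y) \<in> E'\<close> c' unfolding proper_colouring_def by auto
    ultimately show False using same by simp
  qed
  moreover have "c v \<in> c' ` {x \<in> V'. h x = v}" if "v \<in> V" for v
  proof -
    have "0 < card (cls v (c v))" using c[OF that] \<open>0 < a\<close> by linarith
    then obtain x where "x \<in> cls v (c v)" by (metis card_gt_0_iff ex_in_conv)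
    then show ?thesis unfolding cls_def by (intro image_eqI[of _ c' x]) auto
  qed
  moreover have "c ` V \<subseteq> {1..k}" using c by blast
  ultimately show ?thesis unfolding proper_colouring_def by blast
qed

lemma blowup_fibre:
  fixes N :: nat
  assumes "bij_betw \<phi> {0..<n} V" "0 < N" "j < n"
  shows "{x \<in> {0..<n * N}. \<phi> (x div N) = \<phi> j} = {j * N..<j * N + N}"
proof -
  have "\<phi> (x div N) = \<phi> j \<longleftrightarrow> x div N = j" if "x < n * N" for x
    using assms that bij_betw_imp_inj_on[OF assms(1)]
    by (auto simp: less_mult_imp_div_less dest: inj_onD)
  moreover have "x div N = j \<longleftrightarrow> j * N \<le> x \<and> x < j * N + N" for x
    using assms(2) split_div'[of "\<lambda>q. q = j" x N] by (simp add: algebra_simps)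
  moreover have "j * N + N \<le> n * N" using assms(3) by (metis Suc_leI add.commute mult_Suc mult_le_mono1)
  ultimately show ?thesis by auto
qed

lemma exists_blowup:
  fixes V :: "'a set"
  assumes "finite V" "0 < N"
  obtains X :: "nat set" and h :: "nat \<Rightarrow> 'a" where
    "finite X" "card X = card V * N" "h ` X \<subseteq> V"
    "\<And>v. v \<in> V \<Longrightarrow> card {x \<in> X. h x = v} = N" "\<And>v. card {x \<in> X. h x = v} \<le> N"
proof -
  define n where "n = card V"
  obtain \<phi> where \<phi>: "bij_betw \<phi> {0..<n} V"
    using ex_bij_betw_nat_finite[OF assms(1)] unfolding n_def by blast
  define h where "h x = \<phi> (x div N)" for x
  have "h ` {0..<n * N} \<subseteq> V"
    using \<phi> assms(2) bij_betwE unfolding h_def by (fastforce simp: less_mult_imp_div_less)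
  moreover have fibre: "card {x \<in> {0..<n * N}. h x = v} = N" if "v \<in> V" for v
  proof -
    obtain j where "j < n" "v = \<phi> j" using \<phi> \<open>v \<in> V\<close> unfolding bij_betw_def by auto
    then show ?thesis using blowup_fibre[OF \<phi> assms(2)] unfolding h_def by simp
  qed
  moreover have "card {x \<in> {0..<n * N}. h x = v} \<le> N" for v
  proof (cases "v \<in> V")
    case False
    then have "{x \<in> {0..<n * N}. h x = v} = {}" using \<open>h ` {0..<n * N} \<subseteq> V\<close> by blast
    then show ?thesis by (metis card.empty zero_le)
  qed (rule eq_imp_le[OF fibre])
  ultimately show ?thesis using that[of "{0..<n * N}" h] unfolding n_def by simp
qed

lemma fin_graph_induced:
  assumes "finite V" "sym E" "irrefl E"
  shows "fin_graph V (E \<inter> V \<times> V)"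
  using assms unfolding fin_graph_def sym_def irrefl_def by auto

lemma girth_and_colouring_from_sparse_blowup:
  fixes X :: "'b set" and h :: "'b \<Rightarrow> 'a"
  assumes G: "fin_graph V E" and "finite X" "h ` X \<subseteq> V"
    and R: "R \<subseteq> X \<times> X" "sym R" and hom: "\<And>x y. (x, y) \<in> R \<Longrightarrow> (h x, h y) \<in> E"
    and fibres: "\<And>v. v \<in> V \<Longrightarrow> card {x \<in> X. h x = v} = 2 * k * a"
    and sparse: "2 * card (short_cycles X R g) < 2 * k * a"
    and joined: "\<And>u v. (u, v) \<in> E \<Longrightarrow> joins_subsets R a {x \<in> X. h x = u} {x \<in> X. h x = v}"
  shows "\<exists>V' E'. fin_graph V' E' \<and> girth_at_least V' E' g \<and> graph_hom V' E' V E h \<and> h ` V' = V \<and>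
    (\<forall>c'. proper_colouring V' E' k c' \<longrightarrow>
      (\<exists>c. proper_colouring V E k c \<and> (\<forall>v\<in>V. c v \<in> c' ` {u \<in> V'. h u = v})))"
proof -
  define D where "D = hd ` short_cycles X R g"
  define V' where "V' = X - D"
  define E' where "E' = R \<inter> V' \<times> V'"
  have "card D < k * a"
    using sparse card_image_le[OF finite_short_cycles[OF \<open>finite X\<close>], of hd R g]
    unfolding D_def by linarith
  have large: "k * a < card {x \<in> V'. h x = v}" if "v \<in> V" for v
  proof -
    have "{x \<in> V'. h x = v} = {x \<in> X. h x = v} - D" unfolding V'_def by auto
    then have "card {x \<in> X. h x = v} - card D \<le> card {x \<in> V'. h x = v}"
      using diff_card_le_card_Diff[OF finite_imageI[OF finite_short_cycles[OF \<open>finite X\<close>]]]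
      unfolding D_def by simp
    then show ?thesis using fibres[OF that] \<open>card D < k * a\<close> by linarith
  qed
  have "irrefl E" "E \<subseteq> V \<times> V" using G unfolding fin_graph_def by auto
  then have "irrefl R" using hom unfolding irrefl_def by blast
  then have "fin_graph V' E'"
    unfolding E'_def V'_def using \<open>finite X\<close> R(2) by (intro fin_graph_induced) auto
  moreover have "girth_at_least V' E' g"
    unfolding V'_def E'_def D_def by (rule girth_at_least_delete_short_cycles)
  moreover have "graph_hom V' E' V E h"
    using \<open>h ` X \<subseteq> V\<close> hom unfolding graph_hom_def V'_def E'_def by auto
  moreover have "h ` V' = V"
  proof
    show "h ` V' \<subseteq> V" using \<open>h ` X \<subseteq> V\<close> unfolding V'_def by auto
    show "V \<subseteq> h ` V'"
    proof
      fix v assume "v \<in> V"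
      then have "{x \<in> V'. h x = v} \<noteq> {}" using large[of v] by (metis card.empty not_less_zero)
      then show "v \<in> h ` V'" by blast
    qed
  qed
  moreover have "\<exists>c. proper_colouring V E k c \<and> (\<forall>v\<in>V. c v \<in> c' ` {u \<in> V'. h u = v})"
    if "proper_colouring V' E' k c'" for c'
  proof (rule proper_colouring_from_joined_fibres[OF that])
    show "finite V'" using \<open>fin_graph V' E'\<close> unfolding fin_graph_def by simp
    show "0 < a" using sparse by (cases a) auto
    show "k * (a - 1) < card {x \<in> V'. h x = v}" if "v \<in> V" for v
      using large[OF that] by (metis diff_le_self le_less_trans mult_le_mono2)
    show "joins_subsets E' a {x \<in> V'. h x = u} {x \<in> V'. h x = v}" if "(u, v) \<in> E" for u v
      unfolding E'_def by (rule joins_subsets_restrict[OF joined[OF that]]) (auto simp: V'_def)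
  qed (rule \<open>E \<subseteq> V \<times> V\<close>)
  ultimately show ?thesis by blast
qed

lemma exists_sparse_blowup:
  fixes V :: "'a set"
  assumes G: "fin_graph V E" and "V \<noteq> {}" "0 < g" "0 < k"
  obtains X :: "nat set" and h :: "nat \<Rightarrow> 'a" and R a where
    "finite X" "h ` X \<subseteq> V" "R \<subseteq> X \<times> X" "sym R" "\<And>x y. (x, y) \<in> R \<Longrightarrow> (h x, h y) \<in> E"
    "\<And>v. v \<in> V \<Longrightarrow> card {x \<in> X. h x = v} = 2 * k * a"
    "2 * card (short_cycles X R g) < 2 * k * a"
    "\<And>u v. (u, v) \<in> E \<Longrightarrow> joins_subsets R a {x \<in> X. h x = u} {x \<in> X. h x = v}"
proof -
  have "finite V" "E \<subseteq> V \<times> V" "sym E" "irrefl E" using G unfolding fin_graph_def by auto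
  then have "finite E" by (meson finite_SigmaI finite_subset)
  have "0 < card V" using \<open>finite V\<close> \<open>V \<noteq> {}\<close> by (simp add: card_gt_0_iff)
  obtain K a :: nat where "1 \<le> K" "0 < a" and bound:
    "2 / real (2 * k * a) * (\<Sum>l<g. (real (card V * (2 * k * a)) * (1 / K)) ^ l)
      + real (card V) ^ 2 * 4 ^ (2 * k * a) * (1 - 1 / K) ^ (a * a) < 1"
    using exists_blowup_parameters[OF \<open>0 < card V\<close> \<open>0 < k\<close> \<open>0 < g\<close>] by blast
  have "0 < 2 * k * a" using \<open>0 < k\<close> \<open>0 < a\<close> by simp
  obtain X :: "nat set" and h :: "nat \<Rightarrow> 'a" where X: "finite X" "card X = card V * (2 * k * a)"
    "h ` X \<subseteq> V" "\<And>v. v \<in> V \<Longrightarrow> card {x \<in> X. h x = v} = 2 * k * a"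
    and fibre_le: "\<And>v. card {x \<in> X. h x = v} \<le> 2 * k * a"
    using exists_blowup[OF \<open>finite V\<close> \<open>0 < 2 * k * a\<close>] by blast
  have "card E \<le> card V ^ 2"
    using card_mono[OF _ \<open>E \<subseteq> V \<times> V\<close>] \<open>finite V\<close> by (simp add: card_cartesian_product power2_eq_square)
  then have "real (card E) * 4 ^ (2 * k * a) * (1 - 1 / K) ^ (a * a)
      \<le> real (card V) ^ 2 * 4 ^ (2 * k * a) * (1 - 1 / K) ^ (a * a)"
    using \<open>1 \<le> K\<close> of_nat_mono[where 'a=real] by (intro mult_right_mono) fastforce+
  then have "2 / real (2 * k * a) * (\<Sum>l<g. (card X * (1 / K)) ^ l)
      + real (card E) * 4 ^ (2 * k * a) * (1 - 1 / K) ^ (a * a) < 1"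
    using bound unfolding X(2) by linarith
  moreover have "0 \<le> 1 / real K" "1 / real K \<le> 1" using \<open>1 \<le> K\<close> by auto
  ultimately obtain R where "R \<subseteq> X \<times> X" "sym R" "\<And>x y. (x, y) \<in> R \<Longrightarrow> (h x, h y) \<in> E"
    "2 * card (short_cycles X R g) < 2 * k * a"
    "\<And>u v. (u, v) \<in> E \<Longrightarrow> joins_subsets R a {x \<in> X. h x = u} {x \<in> X. h x = v}"
    using exists_sparse_joining_relation[OF X(1) \<open>finite E\<close> \<open>sym E\<close> \<open>irrefl E\<close> _ _ \<open>0 < 2 * k * a\<close> fibre_le]
    by blast
  then show ?thesis using that[OF X(1,3)] X(4) by blast
qed

theorem mainTheorem7:
  fixes V :: "'a set" and E :: "('a \<times> 'a) set" and g k :: nat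
  assumes "fin_graph V E" and "0 < g" and "0 < k"
  shows "\<exists>(V' :: nat set) (E' :: (nat \<times> nat) set) (h :: nat \<Rightarrow> 'a).
           fin_graph V' E' \<and> girth_at_least V' E' g \<and>
           graph_hom V' E' V E h \<and> h ` V' = V \<and>
           (\<forall>c'. proper_colouring V' E' k c' \<longrightarrow>
              (\<exists>c. proper_colouring V E k c \<and>
                   (\<forall>v \<in> V. c v \<in> c' ` {u \<in> V'. h u = v})))"
proof (cases "V = {}")
  case True
  then have "E = {}" using assms(1) unfolding fin_graph_def by auto
  then show ?thesis
    using True unfolding fin_graph_def girth_at_least_def is_cycle_def graph_hom_def proper_colouring_def
    by (intro exI[of _ "{}"]) (auto simp: sym_def irrefl_def)
next
  case False
  obtain X :: "nat set" and h :: "nat \<Rightarrow> 'a" and R a where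
    "finite X" "h ` X \<subseteq> V" "R \<subseteq> X \<times> X" "sym R" "\<And>x y. (x, y) \<in> R \<Longrightarrow> (h x, h y) \<in> E"
    "\<And>v. v \<in> V \<Longrightarrow> card {x \<in> X. h x = v} = 2 * k * a"
    "2 * card (short_cycles X R g) < 2 * k * a"
    "\<And>u v. (u, v) \<in> E \<Longrightarrow> joins_subsets R a {x \<in> X. h x = u} {x \<in> X. h x = v}"
    using exists_sparse_blowup[OF assms(1) False assms(2,3)] by blast
  from girth_and_colouring_from_sparse_blowup[OF assms(1) this]
  show ?thesis by blast
qed

end
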